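(* Fix an arbitrary execution of Algorithm $\mathrm{tree}(G)$ on $G$, and let the rank $r$ and the set $U$ be as defined in the context. If $u,v,w$ are distinct vertices of $G$ with $uv,vw\in E(G)$, $\{u,v\}\subseteq U$, and $r(u)<r(v)<r(w)$, then $d_G(v)=2$.
   Context: $G$ is a finite connected simple undirected graph containing a vertex $a$ with $d_G(a)\ge 2$. For a subtree $T$ of $G$ and a vertex $u$ of $T$: - $V_T(u)$ is the set of vertices $v\in V(G)\setminus V(T)$ with $uv\in E(G)$. - $E_T(u)$ is the set of edges $uv$ of $G$ with $v\in V_T(u)$. - If $|V_T(u)|=1$, then $v_T(u)$ denotes the unique vertex of $V_T(u)$. Three sets of vertices of $T$ are defined: - $W_2(T)=\{u\in V(T): |V_T(u)|\ge 2\}$. - $W_1(T)=\{u\in V(T): |V_T(u)|=1,\ |V_{T\cup E_T(u)}(v_T(u))|\ge 2\}$. - $W_0(T)=\{u\in V(T): |V_T(u)|=1,\ |V_{T\cup E_T(u)}(v_T(u))|\le 1\}$. Algorithm $\mathrm{tree}(G)$ runs as follows. 1. Start with $T=\{a\}$. 2. While $V(T)\ne V(G)$: - If $W_2(T)\ne\emptyset$, pick an arbitrary $u\in W_2(T)$. - Else, if $W_1(T)\neq\emptyset$, pick an arbitrary $u\in W_1(T)$. - Else, let $u$ be the vertex of $W_0(T)$ that joined $V(T)$ most recently. - Set $T:=T\cup E_T(u)$ ("expand $T$ at $u$"). 3. Return $T$. Now fix an execution and let $T$ be the returned spanning tree, rooted at $a$. For $v\ne a$, let $p(v)$ be the parent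 of $v$ in $T$. For each vertex $u$ with $d_T(u)\ge 2$, the algorithm expanded at $u$ exactly once; let $T_u$ be the tree just before that expansion. Thus $u=p(v)$ if and only if $v\in V_{T_u}(u)$. The rank $r:V(G)\to\mathbb{Z}$ is defined by $r(a)=1$ and, for each edge $uv$ of $T$ with $u=p(v)$: - $r(v)=r(u)$ if $u\in W_2(T_u)$; - $r(v)=1+\max_{w\in V(T_u)} r(w)$ otherwise. $U$ is the set of vertices $v$ such that no other vertex has rank $r(v)$. *)

theory Defs
  imports Main
begin

definition simple_graph :: "'a set \<Rightarrow> ('a \<Rightarrow> 'a \<Rightarrow> bool) \<Rightarrow> bool" where
  "simple_graph V E \<longleftrightarrow> finite V \<and> (\<forall>x y. E x y \<longrightarrow> x \<in> V \<and> y \<in> V)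
     \<and> (\<forall>x y. E x y \<longrightarrow> E y x) \<and> (\<forall>x. \<not> E x x)"

definition connected_graph :: "'a set \<Rightarrow> ('a \<Rightarrow> 'a \<Rightarrow> bool) \<Rightarrow> bool" where
  "connected_graph V E \<longleftrightarrow> V \<noteq> {} \<and> (\<forall>x\<in>V. \<forall>y\<in>V. E\<^sup>*\<^sup>* x y)"

definition degree :: "'a set \<Rightarrow> ('a \<Rightarrow> 'a \<Rightarrow> bool) \<Rightarrow> 'a \<Rightarrow> nat" where
  "degree V E v = card {w \<in> V. E v w}"

definition VT :: "'a set \<Rightarrow> ('a \<Rightarrow> 'a \<Rightarrow> bool) \<Rightarrow> 'a set \<Rightarrow> 'a \<Rightarrow> 'a set" where
  "VT V E T u = {v \<in> V - T. E u v}"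

definition W2 :: "'a set \<Rightarrow> ('a \<Rightarrow> 'a \<Rightarrow> bool) \<Rightarrow> 'a set \<Rightarrow> 'a set" where
  "W2 V E T = {u \<in> T. card (VT V E T u) \<ge> 2}"

text \<open>For |V_T(u)| = 1, the tree T \<union> E_T(u) has vertex set T \<union> V_T(u).\<close>
definition W1 :: "'a set \<Rightarrow> ('a \<Rightarrow> 'a \<Rightarrow> bool) \<Rightarrow> 'a set \<Rightarrow> 'a set" where
  "W1 V E T = {u \<in> T. card (VT V E T u) = 1 \<and>
      card (VT V E (T \<union> VT V E T u) (the_elem (VT V E T u))) \<ge> 2}"

definition W0 :: "'a set \<Rightarrow> ('a \<Rightarrow> 'a \<Rightarrow> bool) \<Rightarrow> 'a set \<Rightarrow> 'a set" where
  "W0 V E T = {u \<in> T. card (VT V E T u) = 1 \<and>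
      card (VT V E (T \<union> VT V E T u) (the_elem (VT V E T u))) \<le> 1}"

text \<open>An execution is recorded as the list us of expansion vertices; tsets i is V(T) after i expansions.\<close>
primrec tsets :: "'a set \<Rightarrow> ('a \<Rightarrow> 'a \<Rightarrow> bool) \<Rightarrow> 'a \<Rightarrow> 'a list \<Rightarrow> nat \<Rightarrow> 'a set" where
  "tsets V E a us 0 = {a}"
| "tsets V E a us (Suc i) = tsets V E a us i \<union> VT V E (tsets V E a us i) (us ! i)"

definition join_time :: "'a set \<Rightarrow> ('a \<Rightarrow> 'a \<Rightarrow> bool) \<Rightarrow> 'a \<Rightarrow> 'a list \<Rightarrow> 'a \<Rightarrow> nat" where
  "join_time V E a us x = (LEAST j. x \<in> tsets V E a us j)"

definition is_execution :: "'a set \<Rightarrow> ('a \<Rightarrow> 'a \<Rightarrow> bool) \<Rightarrow> 'a \<Rightarrow> 'a list \<Rightarrow> bool" where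
  "is_execution V E a us \<longleftrightarrow>
     (\<forall>i < length us.
        (let T = tsets V E a us i; u = us ! i in
          T \<noteq> V \<and>
          (if W2 V E T \<noteq> {} then u \<in> W2 V E T
           else if W1 V E T \<noteq> {} then u \<in> W1 V E T
           else u \<in> W0 V E T \<and> (\<forall>x \<in> W0 V E T. join_time V E a us x \<le> join_time V E a us u))))
     \<and> tsets V E a us (length us) = V"

primrec rank_at :: "'a set \<Rightarrow> ('a \<Rightarrow> 'a \<Rightarrow> bool) \<Rightarrow> 'a \<Rightarrow> 'a list \<Rightarrow> nat \<Rightarrow> 'a \<Rightarrow> int" where
  "rank_at V E a us 0 = (\<lambda>v. 1)"
| "rank_at V E a us (Suc i) =
     (let T = tsets V E a us i; u = us ! i; r = rank_at V E a us i in
       (\<lambda>v. if v \<in> VT V E T u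
             then (if u \<in> W2 V E T then r u else 1 + Max (r ` T))
             else r v))"

definition rank :: "'a set \<Rightarrow> ('a \<Rightarrow> 'a \<Rightarrow> bool) \<Rightarrow> 'a \<Rightarrow> 'a list \<Rightarrow> 'a \<Rightarrow> int" where
  "rank V E a us = rank_at V E a us (length us)"

definition Uset :: "'a set \<Rightarrow> ('a \<Rightarrow> 'a \<Rightarrow> bool) \<Rightarrow> 'a \<Rightarrow> 'a list \<Rightarrow> 'a set" where
  "Uset V E a us = {v \<in> V. \<forall>w \<in> V. w \<noteq> v \<longrightarrow> rank V E a us w \<noteq> rank V E a us v}"

end

theory Submission
  imports Defs
begin

text \<open>A vertex x of U never inherits its rank from a W2 parent. Hence when x joins the tree, W2 is
  empty, x is the only new vertex and its rank exceeds all earlier ranks; moreover x has at most one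
  neighbour outside the new tree (otherwise x would be the only W2 vertex, expanded next, and its
  children would share its rank), so the parent of x lies in W0 and W1 is empty at that moment.

  For u, v, w as in the theorem, u joins before v, and w is the only neighbour of v outside the tree
  when v joins. A further neighbour x of v inside that tree is impossible: if x was there before u
  joined, then x was in W1 at that time (its only outside neighbour v has the outside neighbours u
  and w); otherwise u is in W1 right after it joins (v has the outside neighbours x and w), every
  other W1 vertex would already have been in W1 before, so u is expanded next and v joins before x.\<close>

lemma card_le_1_eq_singleton:
  assumes "finite A" "card A \<le> 1" "x \<in> A"
  shows "A = {x}"
  using assms card_le_Suc0_iff_eq by fastforce

lemma VT_antimono: "T \<subseteq> T' \<Longrightarrow> VT V E T' x \<subseteq> VT V E T x"
  by (auto simp: VT_def)

lemma finite_VT: "finite V \<Longrightarrow> finite (VT V E T x)"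
  by (simp add: VT_def)

lemma card_VT_antimono: "finite V \<Longrightarrow> T \<subseteq> T' \<Longrightarrow> card (VT V E T' x) \<le> card (VT V E T x)"
  by (intro card_mono finite_VT VT_antimono)

lemma VT_eq_singleton_if_not_W2:
  assumes "finite V" "x \<in> T" "x \<notin> W2 V E T" "y \<in> VT V E T x"
  shows "VT V E T x = {y}"
  using assms by (intro card_le_1_eq_singleton finite_VT) (auto simp: W2_def)

lemma W2_antimono:
  assumes "finite V" "T \<subseteq> T'" "x \<in> T" "x \<in> W2 V E T'"
  shows "x \<in> W2 V E T"
  using assms card_VT_antimono[of V T T' E x] by (auto simp: W2_def)

lemma W1I:
  assumes "finite V" "c \<in> T" "VT V E T c = {y}"
    and "x \<in> VT V E (insert y T) y" "z \<in> VT V E (insert y T) y" "x \<noteq> z"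
  shows "c \<in> W1 V E T"
proof -
  have "card {x, z} \<le> card (VT V E (insert y T) y)"
    using assms by (intro card_mono finite_VT) auto
  then show ?thesis
    using assms by (simp add: W1_def)
qed

lemma W1_antimono:
  assumes "finite V" "T \<subseteq> T'" "c \<in> T" "c \<notin> W2 V E T" "c \<in> W1 V E T'"
  shows "c \<in> W1 V E T"
proof -
  obtain y where y_T': "VT V E T' c = {y}"
    using assms(5) by (auto simp: W1_def card_1_singleton_iff)
  then have "VT V E T c = {y}"
    using assms VT_antimono VT_eq_singleton_if_not_W2 by (metis insert_subset)
  moreover have "card (VT V E (insert y T') y) \<le> card (VT V E (insert y T) y)"
    using assms by (intro card_VT_antimono) auto
  ultimately show ?thesis
    using assms y_T' by (simp add: W1_def)
qed

locale tree_execution =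
  fixes V :: "'a set" and E :: "'a \<Rightarrow> 'a \<Rightarrow> bool" and a :: 'a and us :: "'a list"
  assumes simple: "simple_graph V E" and root: "a \<in> V" and execution: "is_execution V E a us"
begin

abbreviation T where "T \<equiv> tsets V E a us"
abbreviation rk where "rk \<equiv> rank V E a us"
abbreviation U where "U \<equiv> Uset V E a us"

lemma finite_V: "finite V"
  using simple by (simp add: simple_graph_def)

lemma edge_sym: "E x y \<Longrightarrow> E y x"
  using simple by (simp add: simple_graph_def)

lemma edge_irrefl: "E x y \<Longrightarrow> x \<noteq> y"
  using simple by (auto simp: simple_graph_def)

lemma T_mono: "i \<le> k \<Longrightarrow> T i \<subseteq> T k"
  by (induction k) (auto simp: le_Suc_eq)

lemma T_subset_Suc: "T k \<subseteq> T (Suc k)"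
  by auto

lemma T_subset: "T k \<subseteq> V"
  using root by (induction k) (auto simp: VT_def)

lemma T_length: "T (length us) = V"
  using execution by (simp add: is_execution_def)

lemma less_length_if_T_ne_V: "T k \<noteq> V \<Longrightarrow> k < length us"
  using T_mono[of "length us" k] T_subset[of k] T_length by (cases "k < length us") auto

lemma less_length_if_VT_nonempty: "VT V E (T k) y \<noteq> {} \<Longrightarrow> k < length us"
  by (rule less_length_if_T_ne_V) (auto simp: VT_def)

lemma expansion_rule:
  assumes "k < length us"
  shows "W2 V E (T k) \<noteq> {} \<Longrightarrow> us ! k \<in> W2 V E (T k)"
    and "W2 V E (T k) = {} \<Longrightarrow> W1 V E (T k) \<noteq> {} \<Longrightarrow> us ! k \<in> W1 V E (T k)"
    and "W2 V E (T k) = {} \<Longrightarrow> W1 V E (T k) = {} \<Longrightarrow> us ! k \<in> W0 V E (T k)"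
  using execution assms unfolding is_execution_def Let_def by auto

lemma expanded_in_T: "k < length us \<Longrightarrow> us ! k \<in> T k"
  using expansion_rule[of k] by (auto simp: W2_def W1_def W0_def split: if_splits)

lemma joined_in_T_iff:
  assumes "x \<in> VT V E (T i) (us ! i)"
  shows "x \<in> T k \<longleftrightarrow> i < k"
proof
  assume "x \<in> T k"
  then show "i < k"
    using assms T_mono[of k i] by (cases "i < k") (auto simp: VT_def)
next
  assume "i < k"
  then show "x \<in> T k"
    using assms T_mono[of "Suc i" k] by auto
qed

lemma join_step_unique:
  "x \<in> VT V E (T i) (us ! i) \<Longrightarrow> x \<in> VT V E (T k) (us ! k) \<Longrightarrow> i = k"
  using joined_in_T_iff[of x i "Suc k"] joined_in_T_iff[of x k "Suc i"] by simp

lemma obtain_join_step: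
  assumes "x \<in> V" "x \<noteq> a"
  obtains k where "k < length us" "x \<in> VT V E (T k) (us ! k)"
proof -
  have ex: "\<exists>k. x \<in> T k"
    using assms T_length by auto
  define k where "k = (LEAST k. x \<in> T k)"
  have "x \<in> T k"
    unfolding k_def using ex by (rule LeastI_ex)
  moreover obtain m where m: "k = Suc m"
    using \<open>x \<in> T k\<close> assms by (cases k) auto
  moreover have "x \<notin> T m"
    using not_less_Least[of m "\<lambda>k. x \<in> T k"] m by (simp add: k_def)
  ultimately have "x \<in> VT V E (T m) (us ! m)"
    by simp
  then show thesis
    using that less_length_if_T_ne_V[of m] by (auto simp: VT_def)
qed

lemma rank_at_stable: "y \<in> T k \<Longrightarrow> k \<le> k' \<Longrightarrow> rank_at V E a us k' y = rank_at V E a us k y"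
proof (induction k')
  case (Suc k')
  then show ?case
    using T_mono[of k k'] by (cases "k = Suc k'") (auto simp: Let_def VT_def)
qed simp

lemma rank_eq_rank_at: "y \<in> T k \<Longrightarrow> k \<le> length us \<Longrightarrow> rk y = rank_at V E a us k y"
  unfolding rank_def by (rule rank_at_stable)

lemma rank_joined:
  assumes "k < length us" "y \<in> VT V E (T k) (us ! k)"
  shows "rk y = (if us ! k \<in> W2 V E (T k) then rk (us ! k)
                 else 1 + Max (rank_at V E a us k ` T k))"
proof -
  have "rk y = rank_at V E a us (Suc k) y"
    using assms by (intro rank_eq_rank_at) auto
  moreover have "rk (us ! k) = rank_at V E a us k (us ! k)"
    using assms expanded_in_T by (intro rank_eq_rank_at) auto
  ultimately show ?thesis
    using assms by (simp add: Let_def)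
qed

lemma rank_less_joined:
  assumes "k < length us" "us ! k \<notin> W2 V E (T k)" "y \<in> VT V E (T k) (us ! k)" "z \<in> T k"
  shows "rk z < rk y"
proof -
  have "rk z = rank_at V E a us k z"
    using assms by (intro rank_eq_rank_at) auto
  also have "\<dots> \<le> Max (rank_at V E a us k ` T k)"
    using assms finite_subset[OF T_subset finite_V] by simp
  finally show ?thesis
    using rank_joined[OF assms(1,3)] assms(2) by simp
qed

lemma Uset_rank_unique: "x \<in> U \<Longrightarrow> y \<in> V \<Longrightarrow> y \<noteq> x \<Longrightarrow> rk y \<noteq> rk x"
  by (simp add: Uset_def)

lemma W2_expanded_notin_Uset:
  assumes "k < length us" "us ! k \<in> W2 V E (T k)"
  shows "us ! k \<notin> U"
proof
  assume "us ! k \<in> U"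
  obtain y where y: "y \<in> VT V E (T k) (us ! k)"
    using assms(2) by (fastforce simp: W2_def)
  then have "y \<in> V" "y \<noteq> us ! k"
    using expanded_in_T[OF assms(1)] by (auto simp: VT_def)
  moreover have "rk y = rk (us ! k)"
    using rank_joined[OF assms(1) y] assms(2) by simp
  ultimately show False
    using Uset_rank_unique \<open>us ! k \<in> U\<close> by blast
qed

lemma root_notin_Uset:
  assumes "degree V E a \<ge> 2" "V \<noteq> {a}"
  shows "a \<notin> U"
proof -
  have nonempty: "0 < length us"
    using less_length_if_T_ne_V[of 0] assms(2) by simp
  have "VT V E {a} a = {y \<in> V. E a y}"
    using edge_irrefl by (auto simp: VT_def)
  then have "a \<in> W2 V E (T 0)"
    using assms(1) by (simp add: W2_def degree_def)
  then have "us ! 0 \<in> W2 V E (T 0)"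
    using expansion_rule(1)[OF nonempty] by blast
  moreover from this have "us ! 0 = a"
    by (simp add: W2_def)
  ultimately show ?thesis
    using W2_expanded_notin_Uset[OF nonempty] by simp
qed

context
  fixes x k
  assumes x_U: "x \<in> U" and k_less: "k < length us" and x_joins: "x \<in> VT V E (T k) (us ! k)"
begin

lemma parent_not_W2: "us ! k \<notin> W2 V E (T k)"
proof
  assume W2: "us ! k \<in> W2 V E (T k)"
  have "us ! k \<in> V" "us ! k \<noteq> x"
    using expanded_in_T[OF k_less] T_subset x_joins by (auto simp: VT_def)
  moreover have "rk x = rk (us ! k)"
    using rank_joined[OF k_less x_joins] W2 by simp
  ultimately show False
    using Uset_rank_unique x_U by metis
qed

lemma W2_empty_at_join: "W2 V E (T k) = {}"
  using expansion_rule(1)[OF k_less] parent_not_W2 by blast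

lemma VT_parent_at_join: "VT V E (T k) (us ! k) = {x}"
  using VT_eq_singleton_if_not_W2[OF finite_V expanded_in_T[OF k_less] parent_not_W2 x_joins] .

lemma T_Suc_at_join: "T (Suc k) = insert x (T k)"
  using VT_parent_at_join by simp

lemma rank_le_at_join: "z \<in> T (Suc k) \<Longrightarrow> rk z \<le> rk x"
  using rank_less_joined[OF k_less parent_not_W2 x_joins] T_Suc_at_join by fastforce

lemma W2_after_join_subset: "W2 V E (T (Suc k)) \<subseteq> {x}"
proof
  fix z
  assume z: "z \<in> W2 V E (T (Suc k))"
  show "z \<in> {x}"
  proof (rule ccontr)
    assume "z \<notin> {x}"
    then have "z \<in> T k"
      using z T_Suc_at_join by (auto simp: W2_def)
    then have "z \<in> W2 V E (T k)"
      using W2_antimono[OF finite_V T_subset_Suc] z by simp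
    then show False
      using W2_empty_at_join by blast
  qed
qed

lemma card_VT_after_join_le_1: "card (VT V E (T (Suc k)) x) \<le> 1"
proof (rule ccontr)
  assume "\<not> ?thesis"
  then have x_W2: "x \<in> W2 V E (T (Suc k))"
    using T_Suc_at_join by (simp add: W2_def)
  then have "VT V E (T (Suc k)) x \<noteq> {}"
    by (auto simp: W2_def)
  then have "Suc k < length us"
    by (rule less_length_if_VT_nonempty)
  moreover have "us ! Suc k = x"
    using expansion_rule(1)[OF calculation] x_W2 W2_after_join_subset by blast
  ultimately show False
    using W2_expanded_notin_Uset x_W2 x_U by metis
qed

lemma W2_empty_after_join: "W2 V E (T (Suc k)) = {}"
  using W2_after_join_subset card_VT_after_join_le_1 by (auto simp: W2_def)

lemma W1_empty_at_join: "W1 V E (T k) = {}"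
proof (rule ccontr)
  assume "W1 V E (T k) \<noteq> {}"
  then have "us ! k \<in> W1 V E (T k)"
    using expansion_rule(2)[OF k_less W2_empty_at_join] by blast
  then show False
    using VT_parent_at_join card_VT_after_join_le_1 T_Suc_at_join by (simp add: W1_def)
qed

lemma W1_after_join_expanded:
  assumes "x \<in> W1 V E (T (Suc k))"
  shows "us ! Suc k = x"
proof -
  have "VT V E (T (Suc k)) x \<noteq> {}"
    using assms by (auto simp: W1_def)
  then have "Suc k < length us"
    by (rule less_length_if_VT_nonempty)
  then have c_W1: "us ! Suc k \<in> W1 V E (T (Suc k))"
    using expansion_rule(2) W2_empty_after_join assms by blast
  show ?thesis
  proof (rule ccontr)
    assume "us ! Suc k \<noteq> x"
    then have "us ! Suc k \<in> T k"
      using c_W1 T_Suc_at_join by (auto simp: W1_def)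
    then have "us ! Suc k \<in> W1 V E (T k)"
      using W1_antimono[OF finite_V T_subset_Suc] W2_empty_at_join c_W1 by blast
    then show False
      using W1_empty_at_join by blast
  qed
qed

end

lemma neighbour_in_tree_at_join_unique:
  assumes u_U: "u \<in> U" and j: "j < length us" "u \<in> VT V E (T j) (us ! j)"
    and v_joins: "v \<in> VT V E (T i) (us ! i)" and "j < i"
    and "E u v" and "E v w" and "w \<in> V" "w \<notin> T i"
    and x: "x \<in> T i" "E v x"
  shows "x = u"
proof (rule ccontr)
  assume "x \<noteq> u"
  have T_Suc_j: "T (Suc j) = insert u (T j)"
    using T_Suc_at_join[OF u_U j] .
  have "v \<notin> T (Suc j)"
    using joined_in_T_iff[OF v_joins] \<open>j < i\<close> by (simp del: tsets.simps)
  moreover have "T (Suc j) \<subseteq> T i"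
    using \<open>j < i\<close> by (intro T_mono) simp
  ultimately have v_new: "v \<notin> insert u (T j)" and w_new: "w \<notin> insert u (T j)" and "u \<noteq> w"
    using \<open>w \<notin> T i\<close> unfolding T_Suc_j by auto
  have "v \<in> VT V E (T (Suc j)) u"
    using v_new \<open>E u v\<close> v_joins unfolding T_Suc_j by (simp add: VT_def)
  then have VT_u: "VT V E (T (Suc j)) u = {v}"
    using card_le_1_eq_singleton[OF finite_VT[OF finite_V] card_VT_after_join_le_1[OF u_U j]] by blast
  have "v \<noteq> w" "x \<in> V"
    using \<open>E v w\<close> edge_irrefl x T_subset by auto
  consider "x \<in> T j" | "x \<notin> T (Suc j)"
    using \<open>x \<noteq> u\<close> unfolding T_Suc_j by auto
  then show False
  proof cases
    case 1
    have "v \<in> VT V E (T j) x"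
      using v_new v_joins edge_sym[OF x(2)] by (simp add: VT_def)
    then have "VT V E (T j) x = {v}"
      using VT_eq_singleton_if_not_W2[OF finite_V 1] W2_empty_at_join[OF u_U j] by blast
    moreover have "u \<in> VT V E (insert v (T j)) v" "w \<in> VT V E (insert v (T j)) v"
      using v_new w_new j(2) edge_sym[OF \<open>E u v\<close>] \<open>E v w\<close> \<open>w \<in> V\<close> \<open>v \<noteq> w\<close>
      by (auto simp: VT_def)
    ultimately have "x \<in> W1 V E (T j)"
      using W1I[OF finite_V 1] \<open>u \<noteq> w\<close> by blast
    then show False
      using W1_empty_at_join[OF u_U j] by blast
  next
    case 2
    have "x \<noteq> w"
      using x(1) \<open>w \<notin> T i\<close> by auto
    moreover have "x \<in> VT V E (insert v (T (Suc j))) v" "w \<in> VT V E (insert v (T (Suc j))) v"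
      using 2 w_new x(2) \<open>x \<in> V\<close> \<open>E v w\<close> \<open>w \<in> V\<close> \<open>v \<noteq> w\<close> edge_irrefl[OF x(2)]
      unfolding T_Suc_j by (auto simp: VT_def)
    moreover have "u \<in> T (Suc j)"
      unfolding T_Suc_j by simp
    ultimately have "u \<in> W1 V E (T (Suc j))"
      using W1I[OF finite_V _ VT_u] by blast
    then have "v \<in> VT V E (T (Suc j)) (us ! Suc j)"
      using W1_after_join_expanded[OF u_U j] VT_u by simp
    then have "i = Suc j"
      using join_step_unique[OF v_joins] by blast
    then show False
      using x(1) 2 by simp
  qed
qed

lemma neighbours_eq_at_join:
  assumes u_U: "u \<in> U" and j: "j < length us" "u \<in> VT V E (T j) (us ! j)"
    and v_U: "v \<in> U" and i: "i < length us" "v \<in> VT V E (T i) (us ! i)" and "j < i"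
    and "E u v" and "E v w" and "w \<in> V" "w \<notin> T (Suc i)"
  shows "{y \<in> V. E v y} = {u, w}"
proof -
  have "w \<in> VT V E (T (Suc i)) v"
    using \<open>E v w\<close> \<open>w \<in> V\<close> \<open>w \<notin> T (Suc i)\<close> unfolding VT_def by blast
  then have VT_v: "VT V E (T (Suc i)) v = {w}"
    using card_le_1_eq_singleton[OF finite_VT[OF finite_V] card_VT_after_join_le_1[OF v_U i]] by blast
  have "w \<notin> T i"
    using \<open>w \<notin> T (Suc i)\<close> T_subset_Suc by blast
  have "y \<in> {u, w}" if y: "y \<in> V" "E v y" for y
  proof (cases "y \<in> T i")
    case True
    then show ?thesis
      using neighbour_in_tree_at_join_unique[OF u_U j i(2) \<open>j < i\<close> assms(8-10) \<open>w \<notin> T i\<close>] y by simp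
  next
    case False
    then have "y \<in> VT V E (T (Suc i)) v"
      using y edge_irrefl T_Suc_at_join[OF v_U i] by (auto simp: VT_def)
    then show ?thesis
      using VT_v by simp
  qed
  moreover have "u \<in> V" "v \<in> V"
    using i(2) j(2) by (auto simp: VT_def)
  ultimately show ?thesis
    using assms(8-10) edge_sym by auto
qed

end

theorem lemma1:
  fixes V :: "'a set" and E :: "'a \<Rightarrow> 'a \<Rightarrow> bool" and a u v w :: 'a and us :: "'a list"
  assumes "simple_graph V E" and "connected_graph V E"
    and "a \<in> V" and "degree V E a \<ge> 2"
    and "is_execution V E a us"
    and "u \<in> V" and "v \<in> V" and "w \<in> V"
    and "u \<noteq> v" and "v \<noteq> w" and "u \<noteq> w"
    and "E u v" and "E v w"
    and "u \<in> Uset V E a us" and "v \<in> Uset V E a us"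
    and "rank V E a us u < rank V E a us v" and "rank V E a us v < rank V E a us w"
  shows "degree V E v = 2"
proof -
  interpret tree_execution V E a us
    using assms(1,3,5) by unfold_locales
  note u_U = assms(14) and v_U = assms(15)
  have "u \<noteq> a" "v \<noteq> a"
    using root_notin_Uset[OF assms(4)] assms(6,7,9) u_U v_U by auto
  then obtain j i where j: "j < length us" "u \<in> VT V E (T j) (us ! j)"
    and i: "i < length us" "v \<in> VT V E (T i) (us ! i)"
    using obtain_join_step assms(6,7) by metis
  have "v \<notin> T (Suc j)" "w \<notin> T (Suc i)"
    using rank_le_at_join[OF u_U j] rank_le_at_join[OF v_U i] assms(16,17) by force+
  moreover from this have "j < i"
    using joined_in_T_iff[OF i(2), of "Suc j"] by (simp del: tsets.simps)
  ultimately have "{y \<in> V. E v y} = {u, w}"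
    using neighbours_eq_at_join[OF u_U j v_U i _ assms(12,13,8)] by blast
  then show ?thesis
    using assms(11) by (simp add: degree_def)
qed

end
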